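(* The logic $\mathsf{sICL}=\mathsf{ICK}\oplus(q\to(p\mathrel{\Box\!\!\!\rightarrow} q))\oplus((p\mathrel{\Box\!\!\!\rightarrow}(p\mathrel{\Box\!\!\!\rightarrow} q))\to(p\mathrel{\Box\!\!\!\rightarrow} q))$ is sound and complete with respect to the class of conditional frames $(X,\leq,\mathcal{R})$ such that for all $x,y\in X$ and $R_a\in\mathcal{R}$: $xR_ay$ implies $x\leq y$, and $xR_ay$ implies $x(R_a\circ R_a\circ\leq)y$.
   Context: Formulas: $\phi ::= p\mid\bot\mid\phi\wedge\phi\mid\phi\vee\phi\mid\phi\to\phi\mid\phi\mathrel{\Box\!\!\!\rightarrow}\phi$. $\mathsf{ICK}\oplus\Gamma$ is the smallest set containing intuitionistic propositional logic, $\Gamma$, $(p\mathrel{\Box\!\!\!\rightarrow}(q\wedge r))\leftrightarrow((p\mathrel{\Box\!\!\!\rightarrow} q)\wedge(p\mathrel{\Box\!\!\!\rightarrow} r))$ and $(p\mathrel{\Box\!\!\!\rightarrow}\top)\leftrightarrow\top$, closed under uniform substitution, modus ponens and congruence rules for both arguments of $\mathrel{\Box\!\!\!\rightarrow}$. A conditional frame is $(X,\leq,\mathcal{R})$, $(X,\leq)$ a nonempty preorder, $\mathcal{R}=\{R_a\mid a\text{ an upset}\}$ with $(\leq\circ R_a)\subseteq(R_a\circ\leq)$; valuations assign upsets to letters and $x\models\phi\mathrel{\Box\!\!\!\rightarrow}\psi$ iff every $y$ with $xR_{V(\phi)}y$ satisfies $\psi$. Relation composition $R\circ S$ relates $x$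 to $z$ if $xRy$ and $ySz$ for some $y$. *)

theory Defs
  imports Main
begin

datatype form =
    Var nat
  | Bot
  | And form form
  | Or form form
  | Imp form form
  | Cond form form

definition Top :: form where "Top = Imp Bot Bot"
definition Iff :: "form \<Rightarrow> form \<Rightarrow> form" where
  "Iff a b = And (Imp a b) (Imp b a)"

fun subst :: "(nat \<Rightarrow> form) \<Rightarrow> form \<Rightarrow> form" where
  "subst s (Var n) = s n"
| "subst s Bot = Bot"
| "subst s (And a b) = And (subst s a) (subst s b)"
| "subst s (Or a b) = Or (subst s a) (subst s b)"
| "subst s (Imp a b) = Imp (subst s a) (subst s b)"
| "subst s (Cond a b) = Cond (subst s a) (subst s b)"

inductive_set ICK_plus :: "form set \<Rightarrow> form set" for \<Gamma> :: "form set" where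
  ax1: "Imp a (Imp b a) \<in> ICK_plus \<Gamma>"
| ax2: "Imp (Imp a (Imp b c)) (Imp (Imp a b) (Imp a c)) \<in> ICK_plus \<Gamma>"
| ax3: "Imp (And a b) a \<in> ICK_plus \<Gamma>"
| ax4: "Imp (And a b) b \<in> ICK_plus \<Gamma>"
| ax5: "Imp a (Imp b (And a b)) \<in> ICK_plus \<Gamma>"
| ax6: "Imp a (Or a b) \<in> ICK_plus \<Gamma>"
| ax7: "Imp b (Or a b) \<in> ICK_plus \<Gamma>"
| ax8: "Imp (Imp a c) (Imp (Imp b c) (Imp (Or a b) c)) \<in> ICK_plus \<Gamma>"
| ax9: "Imp Bot a \<in> ICK_plus \<Gamma>"
| gamma: "g \<in> \<Gamma> \<Longrightarrow> g \<in> ICK_plus \<Gamma>"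
| CandAx: "Iff (Cond (Var 0) (And (Var 1) (Var 2)))
               (And (Cond (Var 0) (Var 1)) (Cond (Var 0) (Var 2))) \<in> ICK_plus \<Gamma>"
| CtopAx: "Iff (Cond (Var 0) Top) Top \<in> ICK_plus \<Gamma>"
| usubst: "a \<in> ICK_plus \<Gamma> \<Longrightarrow> subst s a \<in> ICK_plus \<Gamma>"
| mp: "Imp a b \<in> ICK_plus \<Gamma> \<Longrightarrow> a \<in> ICK_plus \<Gamma> \<Longrightarrow> b \<in> ICK_plus \<Gamma>"
| congL: "Iff a b \<in> ICK_plus \<Gamma> \<Longrightarrow> Iff (Cond a c) (Cond b c) \<in> ICK_plus \<Gamma>"
| congR: "Iff a b \<in> ICK_plus \<Gamma> \<Longrightarrow> Iff (Cond c a) (Cond c b) \<in> ICK_plus \<Gamma>"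

text \<open>p = Var 0, q = Var 1.\<close>
definition sICL :: "form set" where
  "sICL = ICK_plus {Imp (Var 1) (Cond (Var 0) (Var 1)),
                    Imp (Cond (Var 0) (Cond (Var 0) (Var 1))) (Cond (Var 0) (Var 1))}"

definition upset :: "'w set \<Rightarrow> ('w \<Rightarrow> 'w \<Rightarrow> bool) \<Rightarrow> 'w set \<Rightarrow> bool" where
  "upset X le a \<longleftrightarrow> a \<subseteq> X \<and> (\<forall>x\<in>a. \<forall>y\<in>X. le x y \<longrightarrow> y \<in> a)"

definition cond_frame :: "'w set \<Rightarrow> ('w \<Rightarrow> 'w \<Rightarrow> bool) \<Rightarrow> ('w set \<Rightarrow> 'w \<Rightarrow> 'w \<Rightarrow> bool) \<Rightarrow> bool" where
  "cond_frame X le R \<longleftrightarrow>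
     X \<noteq> {} \<and>
     (\<forall>x y. le x y \<longrightarrow> x \<in> X \<and> y \<in> X) \<and>
     (\<forall>x\<in>X. le x x) \<and>
     (\<forall>x y z. le x y \<longrightarrow> le y z \<longrightarrow> le x z) \<and>
     (\<forall>a. upset X le a \<longrightarrow> (\<forall>x y. R a x y \<longrightarrow> x \<in> X \<and> y \<in> X)) \<and>
     (\<forall>a. upset X le a \<longrightarrow>
        (\<forall>x y z. le x y \<longrightarrow> R a y z \<longrightarrow> (\<exists>w. R a x w \<and> le w z)))"

fun sat :: "'w set \<Rightarrow> ('w \<Rightarrow> 'w \<Rightarrow> bool) \<Rightarrow> ('w set \<Rightarrow> 'w \<Rightarrow> 'w \<Rightarrow> bool)
            \<Rightarrow> (nat \<Rightarrow> 'w set) \<Rightarrow> 'w \<Rightarrow> form \<Rightarrow> bool" where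
  "sat X le R V x (Var n) = (x \<in> V n)"
| "sat X le R V x Bot = False"
| "sat X le R V x (And a b) = (sat X le R V x a \<and> sat X le R V x b)"
| "sat X le R V x (Or a b) = (sat X le R V x a \<or> sat X le R V x b)"
| "sat X le R V x (Imp a b) =
     (\<forall>y\<in>X. le x y \<longrightarrow> sat X le R V y a \<longrightarrow> sat X le R V y b)"
| "sat X le R V x (Cond a b) =
     (\<forall>y. R {z\<in>X. sat X le R V z a} x y \<longrightarrow> sat X le R V y b)"

definition valid_frame :: "'w set \<Rightarrow> ('w \<Rightarrow> 'w \<Rightarrow> bool) \<Rightarrow> ('w set \<Rightarrow> 'w \<Rightarrow> 'w \<Rightarrow> bool) \<Rightarrow> form \<Rightarrow> bool" where
  "valid_frame X le R \<phi> \<longleftrightarrow>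
     (\<forall>V. (\<forall>n. upset X le (V n)) \<longrightarrow> (\<forall>x\<in>X. sat X le R V x \<phi>))"

definition sICL_frame :: "'w set \<Rightarrow> ('w \<Rightarrow> 'w \<Rightarrow> bool) \<Rightarrow> ('w set \<Rightarrow> 'w \<Rightarrow> 'w \<Rightarrow> bool) \<Rightarrow> bool" where
  "sICL_frame X le R \<longleftrightarrow> cond_frame X le R \<and>
     (\<forall>a. upset X le a \<longrightarrow>
        (\<forall>x\<in>X. \<forall>y\<in>X. R a x y \<longrightarrow> le x y) \<and>
        (\<forall>x\<in>X. \<forall>y\<in>X. R a x y \<longrightarrow> (\<exists>u v. R a x u \<and> R a u v \<and> le v y)))"

end

theory Submission
  imports Defs
begin

(*
  Soundness: Imp q (Cond p q) holds because every R_a-step is a \<le>-step and truth is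
  persistent; Imp (Cond p (Cond p q)) (Cond p q) holds because every R_a-step factors as
  two R_a-steps followed by a \<le>-step.

  Completeness: in the canonical model the worlds are the prime sICL-theories ordered by
  inclusion, and x R_a y for the truth set a of \<phi> means x \<subseteq> y and y contains every \<psi> with
  Cond \<phi> \<psi> \<in> x; by the congruence rule this depends only on the truth set of \<phi>. The axiom
  Imp q (Cond p q) makes x part of its own conditional section {\<psi>. Cond \<phi> \<psi> \<in> x}, so the
  Lindenbaum witnesses of the truth lemma lie above x. For the density condition, given
  x R_a y extend the conditional section of x to a prime theory u that avoids every c with
  Imp c (Cond \<phi> \<psi>) provable for some \<psi> \<notin> y; the second axiom is exactly what makes
  these two sets disjoint, and then x R_a u R_a y.
*)

section \<open>Soundness\<close>

context
  fixes X :: "'w set" and le :: "'w \<Rightarrow> 'w \<Rightarrow> bool" and R :: "'w set \<Rightarrow> 'w \<Rightarrow> 'w \<Rightarrow> bool"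
  assumes frame: "cond_frame X le R"
begin

lemma frame_le_refl: "x \<in> X \<Longrightarrow> le x x"
  using frame unfolding cond_frame_def by blast

lemma frame_le_trans: "le x y \<Longrightarrow> le y z \<Longrightarrow> le x z"
  using frame unfolding cond_frame_def by blast

lemma frame_le_carrier: "le x y \<Longrightarrow> x \<in> X \<and> y \<in> X"
  using frame unfolding cond_frame_def by blast

lemma frame_R_carrier: "upset X le a \<Longrightarrow> R a x y \<Longrightarrow> x \<in> X \<and> y \<in> X"
  using frame unfolding cond_frame_def by blast

lemma frame_le_R_commute: "upset X le a \<Longrightarrow> le x y \<Longrightarrow> R a y z \<Longrightarrow> \<exists>w. R a x w \<and> le w z"
  using frame unfolding cond_frame_def by blast

context
  fixes V :: "nat \<Rightarrow> 'w set"
  assumes val: "\<forall>n. upset X le (V n)"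
begin

lemma sat_mono: "le x y \<Longrightarrow> sat X le R V x \<phi> \<Longrightarrow> sat X le R V y \<phi>"
proof (induction \<phi> arbitrary: x y)
  case (Var n)
  then show ?case using val frame_le_carrier unfolding upset_def by auto
next
  case (Imp a b)
  then show ?case using frame_le_trans by auto
next
  case (Cond a b)
  let ?A = "{z\<in>X. sat X le R V z a}"
  have "upset X le ?A"
    unfolding upset_def using Cond.IH(1) frame_le_carrier by blast
  show ?case
  proof (simp only: sat.simps, intro allI impI)
    fix z assume "R ?A y z"
    then obtain w where "R ?A x w" "le w z"
      using frame_le_R_commute[OF \<open>upset X le ?A\<close> Cond.prems(1)] by blast
    then show "sat X le R V z b" using Cond.prems(2) Cond.IH(2) by auto
  qed
qed auto

lemma upset_sat: "upset X le {z\<in>X. sat X le R V z \<phi>}"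
  unfolding upset_def using sat_mono by blast

lemma sat_subst:
  "x \<in> X \<Longrightarrow> sat X le R V x (subst s \<phi>) = sat X le R (\<lambda>n. {z\<in>X. sat X le R V z (s n)}) x \<phi>"
proof (induction \<phi> arbitrary: x)
  case (Cond a b)
  let ?V = "\<lambda>n. {z\<in>X. sat X le R V z (s n)}"
  have eq: "{z\<in>X. sat X le R V z (subst s a)} = {z\<in>X. sat X le R ?V z a}"
    using Cond.IH(1) by auto
  have inX: "\<And>y. R {z\<in>X. sat X le R V z (subst s a)} x y \<Longrightarrow> y \<in> X"
    using frame_R_carrier[OF upset_sat] by blast
  show ?case using Cond.IH(2) inX by (simp add: eq[symmetric])
qed auto

end

lemma valid_frame_Iff_truth_sets:
  assumes "valid_frame X le R (Iff a b)" and "\<forall>n. upset X le (V n)"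
  shows "{z\<in>X. sat X le R V z a} = {z\<in>X. sat X le R V z b}"
  using assms frame_le_refl unfolding valid_frame_def Iff_def by auto

lemma valid_frame_ICK_plus:
  assumes "\<forall>g\<in>\<Gamma>. valid_frame X le R g" and "\<phi> \<in> ICK_plus \<Gamma>"
  shows "valid_frame X le R \<phi>"
  using assms(2)
proof induction
  case (ax1 a b)
  show ?case unfolding valid_frame_def using sat_mono by auto
next
  case (ax2 a b c)
  show ?case unfolding valid_frame_def using frame_le_refl frame_le_trans by simp
next
  case (ax5 a b)
  show ?case unfolding valid_frame_def using sat_mono by auto
next
  case (ax8 a c b)
  show ?case unfolding valid_frame_def using frame_le_refl frame_le_trans by simp
next
  case (gamma g)
  then show ?case using assms(1) by blast
next
  case (usubst a s)
  show ?case unfolding valid_frame_def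
  proof (intro allI impI ballI)
    fix V :: "nat \<Rightarrow> 'w set" and x assume V: "\<forall>n. upset X le (V n)" and x: "x \<in> X"
    have "\<And>n. upset X le {z\<in>X. sat X le R V z (s n)}" using upset_sat[OF V] .
    then show "sat X le R V x (subst s a)"
      unfolding sat_subst[OF V x] by (rule usubst.IH[unfolded valid_frame_def, rule_format, OF _ x])
  qed
next
  case (mp a b)
  then show ?case unfolding valid_frame_def using frame_le_refl by simp
next
  case (congL a b c)
  then show ?case using valid_frame_Iff_truth_sets unfolding valid_frame_def Iff_def by simp
next
  case (congR a b c)
  show ?case unfolding valid_frame_def Iff_def
  proof (intro allI impI ballI)
    fix V :: "nat \<Rightarrow> 'w set" and x assume V: "\<forall>n. upset X le (V n)"
    have "{z\<in>X. sat X le R V z a} = {z\<in>X. sat X le R V z b}"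
      by (rule valid_frame_Iff_truth_sets[OF congR.IH V])
    moreover have "R {z\<in>X. sat X le R V z c} y z \<Longrightarrow> z \<in> X" for y z
      using frame_R_carrier[OF upset_sat[OF V]] by blast
    ultimately show "sat X le R V x (And (Imp (Cond c a) (Cond c b)) (Imp (Cond c b) (Cond c a)))"
      by auto
  qed
next
  case CandAx
  then show ?case unfolding valid_frame_def Iff_def by simp
next
  case CtopAx
  then show ?case unfolding valid_frame_def Iff_def Top_def using frame_le_carrier by auto
qed (simp_all add: valid_frame_def)

lemma valid_frame_imp_Cond:
  assumes R_le: "\<And>a x y. upset X le a \<Longrightarrow> R a x y \<Longrightarrow> le x y"
  shows "valid_frame X le R (Imp q (Cond p q))"
  unfolding valid_frame_def
proof (intro allI impI ballI)
  fix V :: "nat \<Rightarrow> 'w set" and x assume V: "\<forall>n. upset X le (V n)"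
  show "sat X le R V x (Imp q (Cond p q))"
    using R_le[OF upset_sat[OF V]] sat_mono[OF V] by (simp only: sat.simps) blast
qed

lemma valid_frame_Cond_Cond_imp_Cond:
  assumes R_dense: "\<And>a x y. upset X le a \<Longrightarrow> R a x y \<Longrightarrow> \<exists>u v. R a x u \<and> R a u v \<and> le v y"
  shows "valid_frame X le R (Imp (Cond p (Cond p q)) (Cond p q))"
  unfolding valid_frame_def
proof (intro allI impI ballI)
  fix V :: "nat \<Rightarrow> 'w set" and x assume V: "\<forall>n. upset X le (V n)"
  let ?P = "{z\<in>X. sat X le R V z p}"
  have "sat X le R V z q" if "sat X le R V y (Cond p (Cond p q))" and "R ?P y z" for y z
  proof -
    obtain u v where "R ?P y u" "R ?P u v" "le v z"
      using R_dense[OF upset_sat[OF V] \<open>R ?P y z\<close>] by blast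
    then show ?thesis using that(1) sat_mono[OF V] by auto
  qed
  then show "sat X le R V x (Imp (Cond p (Cond p q)) (Cond p q))" by auto
qed

end

lemma sICL_frame_valid:
  assumes "sICL_frame X le R" and "\<phi> \<in> sICL"
  shows "valid_frame X le R \<phi>"
proof -
  have frame: "cond_frame X le R"
    using assms(1) unfolding sICL_frame_def by blast
  have R_le: "\<And>a x y. upset X le a \<Longrightarrow> R a x y \<Longrightarrow> le x y"
    and R_dense: "\<And>a x y. upset X le a \<Longrightarrow> R a x y \<Longrightarrow> \<exists>u v. R a x u \<and> R a u v \<and> le v y"
    using assms(1) frame_R_carrier[OF frame] unfolding sICL_frame_def by blast+
  have "valid_frame X le R (Imp (Var 1) (Cond (Var 0) (Var 1)))"
    by (rule valid_frame_imp_Cond[OF frame]) (fact R_le)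
  moreover have
    "valid_frame X le R (Imp (Cond (Var 0) (Cond (Var 0) (Var 1))) (Cond (Var 0) (Var 1)))"
    by (rule valid_frame_Cond_Cond_imp_Cond[OF frame]) (fact R_dense)
  ultimately show ?thesis
    using valid_frame_ICK_plus[OF frame _ assms(2)[unfolded sICL_def]] by blast
qed

section \<open>Theories and Lindenbaum's lemma\<close>

context
  fixes \<Gamma> :: "form set"
begin

definition ICK_theory :: "form set \<Rightarrow> bool" where
  "ICK_theory S \<longleftrightarrow> ICK_plus \<Gamma> \<subseteq> S \<and> (\<forall>a b. Imp a b \<in> S \<longrightarrow> a \<in> S \<longrightarrow> b \<in> S)"

definition prime_theory :: "form set \<Rightarrow> bool" where
  "prime_theory P \<longleftrightarrow> ICK_theory P \<and> Bot \<notin> P \<and> (\<forall>a b. Or a b \<in> P \<longrightarrow> a \<in> P \<or> b \<in> P)"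

lemma ICK_theory_ICK_plus: "ICK_theory (ICK_plus \<Gamma>)"
  unfolding ICK_theory_def using ICK_plus.mp by blast

lemma ICK_theory_mp: "ICK_theory S \<Longrightarrow> Imp a b \<in> S \<Longrightarrow> a \<in> S \<Longrightarrow> b \<in> S"
  unfolding ICK_theory_def by blast

lemma ICK_theory_thm: "ICK_theory S \<Longrightarrow> a \<in> ICK_plus \<Gamma> \<Longrightarrow> a \<in> S"
  unfolding ICK_theory_def by blast

lemma ICK_theory_mp_thm: "ICK_theory S \<Longrightarrow> Imp a b \<in> ICK_plus \<Gamma> \<Longrightarrow> a \<in> S \<Longrightarrow> b \<in> S"
  using ICK_theory_mp ICK_theory_thm by blast

lemma ICK_imp_refl: "Imp a a \<in> ICK_plus \<Gamma>"
  using ICK_plus.mp[OF ICK_plus.mp[OF ICK_plus.ax2 ICK_plus.ax1] ICK_plus.ax1[of a a]] .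

lemma ICK_theory_imp_refl: "ICK_theory S \<Longrightarrow> Imp a a \<in> S"
  using ICK_theory_thm ICK_imp_refl by blast

text \<open>The deduction theorem, in the form used throughout: to show \<open>Imp a c \<in> S\<close> it suffices to
  derive \<open>c\<close> in the theory \<open>{c. Imp a c \<in> S}\<close>, which contains \<open>S\<close> and \<open>a\<close>.\<close>

lemma ICK_theory_imp_section:
  assumes S: "ICK_theory S"
  shows "ICK_theory {c. Imp a c \<in> S}"
  unfolding ICK_theory_def
proof (intro conjI allI impI subsetI)
  fix c assume "c \<in> ICK_plus \<Gamma>"
  then show "c \<in> {c. Imp a c \<in> S}"
    using ICK_theory_mp_thm[OF S ICK_plus.ax1] ICK_theory_thm[OF S] by blast
next
  fix b c assume "Imp b c \<in> {c. Imp a c \<in> S}" and "b \<in> {c. Imp a c \<in> S}"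
  then show "c \<in> {c. Imp a c \<in> S}"
    using ICK_theory_mp[OF S ICK_theory_mp_thm[OF S ICK_plus.ax2]] by simp
qed

lemma imp_section_supset: "ICK_theory S \<Longrightarrow> S \<subseteq> {c. Imp a c \<in> S}"
  using ICK_theory_mp_thm ICK_plus.ax1 by blast

lemma ICK_theory_imp_trans:
  assumes S: "ICK_theory S" and "Imp a b \<in> S" and "Imp b c \<in> ICK_plus \<Gamma>"
  shows "Imp a c \<in> S"
  using ICK_theory_mp_thm[OF ICK_theory_imp_section[OF S]] assms(2,3) by blast

lemma ICK_imp_trans: "Imp a b \<in> ICK_plus \<Gamma> \<Longrightarrow> Imp b c \<in> ICK_plus \<Gamma> \<Longrightarrow> Imp a c \<in> ICK_plus \<Gamma>"
  by (rule ICK_theory_imp_trans[OF ICK_theory_ICK_plus])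

lemma ICK_theory_And: "ICK_theory S \<Longrightarrow> And a b \<in> S \<longleftrightarrow> a \<in> S \<and> b \<in> S"
  using ICK_theory_mp_thm[OF _ ICK_plus.ax3] ICK_theory_mp_thm[OF _ ICK_plus.ax4]
    ICK_theory_mp[OF _ ICK_theory_mp_thm[OF _ ICK_plus.ax5]] by blast

lemma ICK_Iff: "Iff a b \<in> ICK_plus \<Gamma> \<longleftrightarrow> Imp a b \<in> ICK_plus \<Gamma> \<and> Imp b a \<in> ICK_plus \<Gamma>"
  unfolding Iff_def by (rule ICK_theory_And[OF ICK_theory_ICK_plus])

lemma ICK_Cond_And: "Iff (Cond c (And a b)) (And (Cond c a) (Cond c b)) \<in> ICK_plus \<Gamma>"
  using ICK_plus.usubst[OF ICK_plus.CandAx, where s = "\<lambda>n. if n = 0 then c else if n = 1 then a else b"]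
  by (simp add: Iff_def)

lemma ICK_Cond_Top: "Cond c Top \<in> ICK_plus \<Gamma>"
proof -
  have "Iff (Cond c Top) Top \<in> ICK_plus \<Gamma>"
    using ICK_plus.usubst[OF ICK_plus.CtopAx, where s = "\<lambda>n. c"] by (simp add: Iff_def Top_def)
  moreover have "Top \<in> ICK_plus \<Gamma>"
    unfolding Top_def by (rule ICK_imp_refl)
  ultimately show ?thesis
    using ICK_plus.mp ICK_Iff by blast
qed

lemma ICK_Cond_mono:
  assumes "Imp a b \<in> ICK_plus \<Gamma>"
  shows "Imp (Cond c a) (Cond c b) \<in> ICK_plus \<Gamma>"
proof -
  have "And a b \<in> {d. Imp a d \<in> ICK_plus \<Gamma>}"
    using ICK_theory_And[OF ICK_theory_imp_section[OF ICK_theory_ICK_plus]] ICK_imp_refl assms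
    by blast
  then have "Iff a (And a b) \<in> ICK_plus \<Gamma>"
    using ICK_Iff ICK_plus.ax3 by blast
  then have "Imp (Cond c a) (Cond c (And a b)) \<in> ICK_plus \<Gamma>"
    using ICK_plus.congR ICK_Iff by blast
  moreover have "Imp (Cond c (And a b)) (And (Cond c a) (Cond c b)) \<in> ICK_plus \<Gamma>"
    using ICK_Cond_And ICK_Iff by blast
  ultimately show ?thesis
    using ICK_imp_trans[OF ICK_imp_trans ICK_plus.ax4] by blast
qed

lemma ICK_Cond_cong_left: "Iff a b \<in> ICK_plus \<Gamma> \<Longrightarrow> Imp (Cond a c) (Cond b c) \<in> ICK_plus \<Gamma>"
  using ICK_plus.congL ICK_Iff by blast

lemma ICK_And_mp: "Imp (And (Imp c d) c) d \<in> ICK_plus \<Gamma>"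
proof -
  let ?T = "{e. Imp (And (Imp c d) c) e \<in> ICK_plus \<Gamma>}"
  have T: "ICK_theory ?T"
    by (rule ICK_theory_imp_section[OF ICK_theory_ICK_plus])
  have "And (Imp c d) c \<in> ?T"
    using ICK_imp_refl by simp
  then show ?thesis
    using ICK_theory_mp[OF T] ICK_theory_And[OF T] by blast
qed

lemma ICK_theory_Cond_section:
  assumes S: "ICK_theory S"
  shows "ICK_theory {c. Cond a c \<in> S}"
  unfolding ICK_theory_def
proof (intro conjI allI impI subsetI)
  fix c assume "c \<in> ICK_plus \<Gamma>"
  then have "Imp Top c \<in> ICK_plus \<Gamma>"
    using ICK_plus.mp[OF ICK_plus.ax1] by blast
  then show "c \<in> {c. Cond a c \<in> S}"
    using ICK_theory_mp_thm[OF S ICK_Cond_mono] ICK_theory_thm[OF S ICK_Cond_Top] by blast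
next
  fix c d assume "Imp c d \<in> {c. Cond a c \<in> S}" and "c \<in> {c. Cond a c \<in> S}"
  then have "Cond a (And (Imp c d) c) \<in> S"
    using ICK_theory_mp_thm[OF S] ICK_Cond_And ICK_Iff ICK_theory_And[OF S] by blast
  then show "d \<in> {c. Cond a c \<in> S}"
    using ICK_theory_mp_thm[OF S ICK_Cond_mono[OF ICK_And_mp]] by blast
qed

lemma ICK_theory_Union_chain:
  assumes "C \<noteq> {}" and "\<forall>S\<in>C. ICK_theory S" and "chain\<^sub>\<subseteq> C"
  shows "ICK_theory (\<Union>C)"
  unfolding ICK_theory_def
proof (intro conjI allI impI)
  show "ICK_plus \<Gamma> \<subseteq> \<Union>C"
    using assms(1,2) unfolding ICK_theory_def by blast
next
  fix a b assume "Imp a b \<in> \<Union>C" and "a \<in> \<Union>C"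
  then obtain S where "S \<in> C" "Imp a b \<in> S" "a \<in> S"
    using assms(3) unfolding chain_subset_def by blast
  then show "b \<in> \<Union>C"
    using assms(2) ICK_theory_mp by blast
qed

lemma maximal_ICK_theory_prime:
  assumes M: "ICK_theory M" and "M \<inter> D = {}" and "Bot \<in> D"
    and Or_closed: "\<And>c d. c \<in> D \<Longrightarrow> d \<in> D \<Longrightarrow> Or c d \<in> D"
    and maximal: "\<And>S. ICK_theory S \<Longrightarrow> M \<subseteq> S \<Longrightarrow> S \<inter> D = {} \<Longrightarrow> S = M"
  shows "prime_theory M"
proof -
  have escape: "\<exists>d\<in>D. Imp a d \<in> M" if "a \<notin> M" for a
  proof (rule ccontr)
    assume "\<not> ?thesis"
    then have "{c. Imp a c \<in> M} = M"
      using maximal ICK_theory_imp_section[OF M] imp_section_supset[OF M] by blast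
    then show False
      using ICK_theory_imp_refl[OF M, of a] that by blast
  qed
  have "a \<in> M \<or> b \<in> M" if ab: "Or a b \<in> M" for a b
  proof (rule ccontr)
    assume "\<not> ?thesis"
    then obtain d1 d2 where "d1 \<in> D" "d2 \<in> D" "Imp a d1 \<in> M" "Imp b d2 \<in> M"
      using escape by blast
    moreover from this have "Imp a (Or d1 d2) \<in> M" and "Imp b (Or d1 d2) \<in> M"
      using ICK_theory_imp_trans[OF M] ICK_plus.ax6 ICK_plus.ax7 by blast+
    then have "Or d1 d2 \<in> M"
      using ICK_theory_mp[OF M ICK_theory_mp[OF M ICK_theory_mp_thm[OF M ICK_plus.ax8]]] ab
      by blast
    ultimately show False
      using Or_closed \<open>M \<inter> D = {}\<close> by blast
  qed
  then show ?thesis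
    using M \<open>M \<inter> D = {}\<close> \<open>Bot \<in> D\<close> unfolding prime_theory_def by blast
qed

lemma lindenbaum:
  assumes T: "ICK_theory T" and "T \<inter> D = {}" and "Bot \<in> D"
    and Or_closed: "\<And>c d. c \<in> D \<Longrightarrow> d \<in> D \<Longrightarrow> Or c d \<in> D"
  shows "\<exists>P. prime_theory P \<and> T \<subseteq> P \<and> P \<inter> D = {}"
proof -
  let ?A = "{S. ICK_theory S \<and> T \<subseteq> S \<and> S \<inter> D = {}}"
  have "\<exists>M\<in>?A. \<forall>S\<in>?A. M \<subseteq> S \<longrightarrow> S = M"
  proof (rule subset_Zorn_nonempty)
    show "?A \<noteq> {}"
      using assms by blast
  next
    fix C assume C: "C \<noteq> {}" and "subset.chain ?A C"
    then have "C \<subseteq> ?A" and "chain\<^sub>\<subseteq> C"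
      unfolding subset_chain_def chain_subset_def by blast+
    then have "ICK_theory (\<Union>C)"
      using ICK_theory_Union_chain[OF C] by blast
    then show "\<Union>C \<in> ?A"
      using C \<open>C \<subseteq> ?A\<close> by blast
  qed
  then obtain M where M: "M \<in> ?A" and maximal: "\<forall>S\<in>?A. M \<subseteq> S \<longrightarrow> S = M"
    by blast
  have "prime_theory M"
  proof (rule maximal_ICK_theory_prime)
    show "ICK_theory M" and "M \<inter> D = {}"
      using M by blast+
    show "Bot \<in> D" and "\<And>c d. c \<in> D \<Longrightarrow> d \<in> D \<Longrightarrow> Or c d \<in> D"
      by (fact \<open>Bot \<in> D\<close> Or_closed)+
    show "S = M" if "ICK_theory S" and "M \<subseteq> S" and "S \<inter> D = {}" for S
      using maximal M that by blast
  qed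
  then show ?thesis
    using M by blast
qed

lemma prime_theory_extension:
  assumes T: "ICK_theory T" and "b \<notin> T"
  shows "\<exists>P. prime_theory P \<and> T \<subseteq> P \<and> b \<notin> P"
proof -
  let ?D = "{c. Imp c b \<in> ICK_plus \<Gamma>}"
  have "\<exists>P. prime_theory P \<and> T \<subseteq> P \<and> P \<inter> ?D = {}"
  proof (rule lindenbaum[OF T])
    show "T \<inter> ?D = {}"
      using ICK_theory_mp_thm[OF T] \<open>b \<notin> T\<close> by blast
    show "Bot \<in> ?D"
      by (simp add: ICK_plus.ax9)
    show "Or c d \<in> ?D" if "c \<in> ?D" and "d \<in> ?D" for c d
      using that ICK_plus.mp[OF ICK_plus.mp[OF ICK_plus.ax8]] by blast
  qed
  then show ?thesis
    using ICK_imp_refl by blast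
qed

lemma Or_implying_Cond:
  assumes "prime_theory y"
    and "Imp c (Cond \<phi> \<psi>1) \<in> ICK_plus \<Gamma>" and "\<psi>1 \<notin> y"
    and "Imp d (Cond \<phi> \<psi>2) \<in> ICK_plus \<Gamma>" and "\<psi>2 \<notin> y"
  shows "\<exists>\<psi>. \<psi> \<notin> y \<and> Imp (Or c d) (Cond \<phi> \<psi>) \<in> ICK_plus \<Gamma>"
proof (intro exI conjI)
  show "Or \<psi>1 \<psi>2 \<notin> y"
    using assms(1,3,5) unfolding prime_theory_def by blast
  have "Imp c (Cond \<phi> (Or \<psi>1 \<psi>2)) \<in> ICK_plus \<Gamma>"
    using ICK_imp_trans[OF assms(2) ICK_Cond_mono[OF ICK_plus.ax6]] .
  moreover have "Imp d (Cond \<phi> (Or \<psi>1 \<psi>2)) \<in> ICK_plus \<Gamma>"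
    using ICK_imp_trans[OF assms(4) ICK_Cond_mono[OF ICK_plus.ax7]] .
  ultimately show "Imp (Or c d) (Cond \<phi> (Or \<psi>1 \<psi>2)) \<in> ICK_plus \<Gamma>"
    using ICK_plus.mp[OF ICK_plus.mp[OF ICK_plus.ax8]] by blast
qed

section \<open>The canonical model\<close>

definition canon_worlds :: "form set set" where
  "canon_worlds = {P. prime_theory P}"

definition canon_le :: "form set \<Rightarrow> form set \<Rightarrow> bool" where
  "canon_le x y \<longleftrightarrow> x \<in> canon_worlds \<and> y \<in> canon_worlds \<and> x \<subseteq> y"

definition canon_truth :: "form \<Rightarrow> form set set" where
  "canon_truth \<phi> = {x \<in> canon_worlds. \<phi> \<in> x}"

text \<open>For upsets that are not of the form \<open>canon_truth \<phi>\<close> the relation is plain inclusion: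
  such upsets are never the truth set of a formula, so any relation meeting the frame
  conditions would do.\<close>

definition canon_R :: "form set set \<Rightarrow> form set \<Rightarrow> form set \<Rightarrow> bool" where
  "canon_R A x y \<longleftrightarrow> canon_le x y \<and> (\<forall>\<phi> \<psi>. A = canon_truth \<phi> \<longrightarrow> Cond \<phi> \<psi> \<in> x \<longrightarrow> \<psi> \<in> y)"

lemma upset_canon_truth: "upset canon_worlds canon_le (canon_truth \<phi>)"
  unfolding upset_def canon_truth_def canon_le_def by blast

lemma canon_worlds_ICK_theory: "x \<in> canon_worlds \<Longrightarrow> ICK_theory x"
  unfolding canon_worlds_def prime_theory_def by blast

lemma canon_truth_subset_imp:
  assumes "canon_truth a \<subseteq> canon_truth b"
  shows "Imp a b \<in> ICK_plus \<Gamma>"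
proof (rule ccontr)
  assume "Imp a b \<notin> ICK_plus \<Gamma>"
  then obtain P where "prime_theory P" "{c. Imp a c \<in> ICK_plus \<Gamma>} \<subseteq> P" "b \<notin> P"
    using prime_theory_extension[OF ICK_theory_imp_section[OF ICK_theory_ICK_plus]] by blast
  moreover from this have "a \<in> P"
    using ICK_imp_refl by blast
  ultimately show False
    using assms unfolding canon_truth_def canon_worlds_def by blast
qed

lemma canon_R_canon_truth:
  "canon_R (canon_truth a) x y \<longleftrightarrow> canon_le x y \<and> (\<forall>\<psi>. Cond a \<psi> \<in> x \<longrightarrow> \<psi> \<in> y)"
proof
  assume "canon_le x y \<and> (\<forall>\<psi>. Cond a \<psi> \<in> x \<longrightarrow> \<psi> \<in> y)"
  moreover have "Cond a \<psi> \<in> x" if "canon_le x y" "canon_truth a = canon_truth \<phi>" "Cond \<phi> \<psi> \<in> x"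
    for \<phi> \<psi>
  proof -
    have "Iff \<phi> a \<in> ICK_plus \<Gamma>"
      using canon_truth_subset_imp \<open>canon_truth a = canon_truth \<phi>\<close> ICK_Iff by simp
    moreover have "ICK_theory x"
      using \<open>canon_le x y\<close> canon_worlds_ICK_theory unfolding canon_le_def by blast
    ultimately show ?thesis
      using ICK_theory_mp_thm ICK_Cond_cong_left \<open>Cond \<phi> \<psi> \<in> x\<close> by blast
  qed
  ultimately show "canon_R (canon_truth a) x y"
    unfolding canon_R_def by blast
qed (auto simp: canon_R_def)

lemma canon_imp_witness:
  assumes x: "x \<in> canon_worlds" and "Imp a b \<notin> x"
  shows "\<exists>y. canon_le x y \<and> a \<in> y \<and> b \<notin> y"
proof -
  have x_thy: "ICK_theory x"
    using canon_worlds_ICK_theory[OF x] .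
  obtain P where "prime_theory P" "{c. Imp a c \<in> x} \<subseteq> P" "b \<notin> P"
    using prime_theory_extension[OF ICK_theory_imp_section[OF x_thy]] \<open>Imp a b \<notin> x\<close> by blast
  moreover from this have "x \<subseteq> P" and "a \<in> P"
    using imp_section_supset[OF x_thy] ICK_theory_imp_refl[OF x_thy] by blast+
  ultimately show ?thesis
    using x unfolding canon_le_def canon_worlds_def by blast
qed

context
  assumes imp_Cond: "\<And>p q. Imp q (Cond p q) \<in> ICK_plus \<Gamma>"
    and Cond_Cond_imp_Cond: "\<And>p q. Imp (Cond p (Cond p q)) (Cond p q) \<in> ICK_plus \<Gamma>"
begin

lemma canon_Cond_witness:
  assumes x: "x \<in> canon_worlds" and "Cond a b \<notin> x"
  shows "\<exists>y. canon_R (canon_truth a) x y \<and> b \<notin> y"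
proof -
  have x_thy: "ICK_theory x"
    using canon_worlds_ICK_theory[OF x] .
  obtain P where "prime_theory P" "{c. Cond a c \<in> x} \<subseteq> P" "b \<notin> P"
    using prime_theory_extension[OF ICK_theory_Cond_section[OF x_thy]] \<open>Cond a b \<notin> x\<close> by blast
  moreover from this have "x \<subseteq> P"
    using ICK_theory_mp_thm[OF x_thy imp_Cond] by blast
  ultimately show ?thesis
    using x unfolding canon_R_canon_truth canon_le_def canon_worlds_def by blast
qed

lemma canon_sat_iff_mem:
  "x \<in> canon_worlds \<Longrightarrow>
     sat canon_worlds canon_le canon_R (\<lambda>n. canon_truth (Var n)) x \<phi> \<longleftrightarrow> \<phi> \<in> x"
proof (induction \<phi> arbitrary: x)
  case (Var n)
  then show ?case by (simp add: canon_truth_def)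
next
  case Bot
  then show ?case unfolding canon_worlds_def prime_theory_def by simp
next
  case (And a b)
  have "And a b \<in> x \<longleftrightarrow> a \<in> x \<and> b \<in> x"
    by (rule ICK_theory_And[OF canon_worlds_ICK_theory[OF And.prems]])
  then show ?case
    using And by simp
next
  case (Or a b)
  have x_thy: "ICK_theory x"
    by (rule canon_worlds_ICK_theory[OF Or.prems])
  have "Or a b \<in> x \<longleftrightarrow> a \<in> x \<or> b \<in> x"
  proof
    assume "Or a b \<in> x"
    then show "a \<in> x \<or> b \<in> x"
      using Or.prems unfolding canon_worlds_def prime_theory_def by blast
  next
    assume "a \<in> x \<or> b \<in> x"
    then show "Or a b \<in> x"
      using ICK_theory_mp_thm[OF x_thy ICK_plus.ax6] ICK_theory_mp_thm[OF x_thy ICK_plus.ax7] by blast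
  qed
  then show ?case
    using Or by simp
next
  case (Imp a b)
  have "Imp a b \<in> x \<longleftrightarrow> (\<forall>y\<in>canon_worlds. canon_le x y \<longrightarrow> a \<in> y \<longrightarrow> b \<in> y)"
  proof
    assume "Imp a b \<in> x"
    then show "\<forall>y\<in>canon_worlds. canon_le x y \<longrightarrow> a \<in> y \<longrightarrow> b \<in> y"
      using canon_worlds_ICK_theory ICK_theory_mp unfolding canon_le_def by blast
  next
    assume "\<forall>y\<in>canon_worlds. canon_le x y \<longrightarrow> a \<in> y \<longrightarrow> b \<in> y"
    then show "Imp a b \<in> x"
      using canon_imp_witness[OF Imp.prems] unfolding canon_le_def by blast
  qed
  then show ?case
    using Imp.IH by simp
next
  case (Cond a b)
  let ?M = "sat canon_worlds canon_le canon_R (\<lambda>n. canon_truth (Var n))"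
  have "{z \<in> canon_worlds. ?M z a} = canon_truth a"
    using Cond.IH(1) unfolding canon_truth_def by blast
  moreover have "y \<in> canon_worlds" if "canon_R (canon_truth a) x y" for y
    using that unfolding canon_R_def canon_le_def by blast
  ultimately have "?M x (Cond a b) \<longleftrightarrow> (\<forall>y. canon_R (canon_truth a) x y \<longrightarrow> b \<in> y)"
    using Cond.IH(2) by simp
  also have "\<dots> \<longleftrightarrow> Cond a b \<in> x"
  proof
    assume "\<forall>y. canon_R (canon_truth a) x y \<longrightarrow> b \<in> y"
    then show "Cond a b \<in> x"
      using canon_Cond_witness[OF Cond.prems] by blast
  next
    assume "Cond a b \<in> x"
    then show "\<forall>y. canon_R (canon_truth a) x y \<longrightarrow> b \<in> y"
      unfolding canon_R_canon_truth by blast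
  qed
  finally show ?case .
qed

lemma canon_R_interpolant:
  assumes "canon_R (canon_truth \<phi>) x y"
  shows "\<exists>u. canon_R (canon_truth \<phi>) x u \<and> canon_R (canon_truth \<phi>) u y"
proof -
  have x: "x \<in> canon_worlds" and y: "y \<in> canon_worlds"
    and Cond_x: "\<And>\<psi>. Cond \<phi> \<psi> \<in> x \<Longrightarrow> \<psi> \<in> y"
    using assms unfolding canon_R_canon_truth canon_le_def by blast+
  have x_thy: "ICK_theory x"
    using canon_worlds_ICK_theory[OF x] .
  let ?D = "{c. \<exists>\<psi>. \<psi> \<notin> y \<and> Imp c (Cond \<phi> \<psi>) \<in> ICK_plus \<Gamma>}"
  have "{c. Cond \<phi> c \<in> x} \<inter> ?D = {}"
  proof (rule ccontr)
    assume "\<not> ?thesis"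
    then obtain c \<psi> where "Cond \<phi> c \<in> x" "\<psi> \<notin> y" "Imp c (Cond \<phi> \<psi>) \<in> ICK_plus \<Gamma>"
      by blast
    then have "Cond \<phi> (Cond \<phi> \<psi>) \<in> x"
      using ICK_theory_mp_thm[OF x_thy ICK_Cond_mono] by blast
    then have "Cond \<phi> \<psi> \<in> x"
      using ICK_theory_mp_thm[OF x_thy Cond_Cond_imp_Cond] by blast
    then show False
      using Cond_x \<open>\<psi> \<notin> y\<close> by blast
  qed
  moreover have "Bot \<in> ?D"
    using y ICK_plus.ax9 unfolding canon_worlds_def prime_theory_def by blast
  moreover have "Or c d \<in> ?D" if "c \<in> ?D" and "d \<in> ?D" for c d
    using that Or_implying_Cond y unfolding canon_worlds_def by blast
  ultimately obtain u where u: "prime_theory u" and "{c. Cond \<phi> c \<in> x} \<subseteq> u" and "u \<inter> ?D = {}"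
    using lindenbaum[OF ICK_theory_Cond_section[OF x_thy]] by blast
  moreover have "x \<subseteq> u"
    using \<open>{c. Cond \<phi> c \<in> x} \<subseteq> u\<close> ICK_theory_mp_thm[OF x_thy imp_Cond] by blast
  moreover have "u \<subseteq> y"
    using \<open>u \<inter> ?D = {}\<close> imp_Cond by blast
  moreover have "\<psi> \<in> y" if "Cond \<phi> \<psi> \<in> u" for \<psi>
    using that \<open>u \<inter> ?D = {}\<close> ICK_imp_refl by blast
  ultimately show ?thesis
    using x y unfolding canon_R_canon_truth canon_le_def canon_worlds_def by blast
qed

lemma canon_R_dense:
  assumes "canon_R A x y"
  shows "\<exists>u v. canon_R A x u \<and> canon_R A u v \<and> canon_le v y"
proof -
  have "canon_le y y"
    using assms unfolding canon_R_def canon_le_def by blast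
  moreover have "\<exists>u. canon_R A x u \<and> canon_R A u y"
  proof (cases "\<exists>\<phi>. A = canon_truth \<phi>")
    case True
    then show ?thesis
      using canon_R_interpolant assms by blast
  next
    case False
    then have "canon_R A y y"
      using \<open>canon_le y y\<close> unfolding canon_R_def by blast
    then show ?thesis
      using assms by blast
  qed
  ultimately show ?thesis
    by blast
qed

lemma sICL_frame_canon:
  assumes "canon_worlds \<noteq> {}"
  shows "sICL_frame canon_worlds canon_le canon_R"
proof -
  have "\<forall>x y. canon_le x y \<longrightarrow> x \<in> canon_worlds \<and> y \<in> canon_worlds"
    and "\<forall>x\<in>canon_worlds. canon_le x x"
    and "\<forall>x y z. canon_le x y \<longrightarrow> canon_le y z \<longrightarrow> canon_le x z"
    unfolding canon_le_def by blast+
  moreover have R_le: "\<And>A x y. canon_R A x y \<Longrightarrow> canon_le x y"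
    unfolding canon_R_def by blast
  moreover have "\<forall>A. upset canon_worlds canon_le A \<longrightarrow>
      (\<forall>x y. canon_R A x y \<longrightarrow> x \<in> canon_worlds \<and> y \<in> canon_worlds)"
    using R_le unfolding canon_le_def by blast
  moreover have "\<forall>A. upset canon_worlds canon_le A \<longrightarrow>
      (\<forall>x y z. canon_le x y \<longrightarrow> canon_R A y z \<longrightarrow> (\<exists>w. canon_R A x w \<and> canon_le w z))"
  proof (intro allI impI)
    fix A x y z assume "canon_le x y" and "canon_R A y z"
    then have "canon_R A x z" and "canon_le z z"
      unfolding canon_R_def canon_le_def by blast+
    then show "\<exists>w. canon_R A x w \<and> canon_le w z"
      by blast
  qed
  moreover have "\<forall>A. upset canon_worlds canon_le A \<longrightarrow>
      (\<forall>x\<in>canon_worlds. \<forall>y\<in>canon_worlds. canon_R A x y \<longrightarrow> canon_le x y) \<and>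
      (\<forall>x\<in>canon_worlds. \<forall>y\<in>canon_worlds. canon_R A x y \<longrightarrow>
         (\<exists>u v. canon_R A x u \<and> canon_R A u v \<and> canon_le v y))"
    using R_le canon_R_dense by blast
  ultimately show ?thesis
    unfolding sICL_frame_def cond_frame_def using assms by (intro conjI)
qed

end

end

lemma sICL_imp_Cond: "Imp q (Cond p q) \<in> sICL"
proof -
  have "subst (\<lambda>n. if n = 0 then p else q) (Imp (Var 1) (Cond (Var 0) (Var 1))) \<in> sICL"
    unfolding sICL_def by (intro ICK_plus.usubst ICK_plus.gamma) simp
  then show ?thesis
    by simp
qed

lemma sICL_Cond_Cond_imp_Cond: "Imp (Cond p (Cond p q)) (Cond p q) \<in> sICL"
proof -
  have "subst (\<lambda>n. if n = 0 then p else q)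
      (Imp (Cond (Var 0) (Cond (Var 0) (Var 1))) (Cond (Var 0) (Var 1))) \<in> sICL"
    unfolding sICL_def by (intro ICK_plus.usubst ICK_plus.gamma) simp
  then show ?thesis
    by simp
qed

lemma sICL_complete:
  assumes valid: "\<forall>(X::form set set) le R. sICL_frame X le R \<longrightarrow> valid_frame X le R \<phi>"
  shows "\<phi> \<in> sICL"
proof (rule ccontr)
  obtain \<Gamma> where \<Gamma>: "sICL = ICK_plus \<Gamma>"
    unfolding sICL_def by blast
  note imp_Cond = sICL_imp_Cond[unfolded \<Gamma>]
    and Cond_Cond_imp_Cond = sICL_Cond_Cond_imp_Cond[unfolded \<Gamma>]
  assume "\<phi> \<notin> sICL"
  then obtain x where "prime_theory \<Gamma> x" and "\<phi> \<notin> x"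
    using prime_theory_extension[OF ICK_theory_ICK_plus] \<Gamma> by blast
  then have x: "x \<in> canon_worlds \<Gamma>"
    unfolding canon_worlds_def by blast
  have "sICL_frame (canon_worlds \<Gamma>) (canon_le \<Gamma>) (canon_R \<Gamma>)"
    using sICL_frame_canon[OF imp_Cond Cond_Cond_imp_Cond] x by blast
  then have "valid_frame (canon_worlds \<Gamma>) (canon_le \<Gamma>) (canon_R \<Gamma>) \<phi>"
    using valid by blast
  then have "sat (canon_worlds \<Gamma>) (canon_le \<Gamma>) (canon_R \<Gamma>) (\<lambda>n. canon_truth \<Gamma> (Var n)) x \<phi>"
    unfolding valid_frame_def using upset_canon_truth x by (elim allE impE) auto
  then show False
    using canon_sat_iff_mem[OF imp_Cond Cond_Cond_imp_Cond x] \<open>\<phi> \<notin> x\<close> by blast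
qed

theorem theorem7p17:
  fixes \<phi> :: form
  shows "(\<phi> \<in> sICL \<longrightarrow>
            (\<forall>(X::'w set) le R. sICL_frame X le R \<longrightarrow> valid_frame X le R \<phi>))
       \<and> ((\<forall>(X::form set set) le R. sICL_frame X le R \<longrightarrow> valid_frame X le R \<phi>)
            \<longrightarrow> \<phi> \<in> sICL)"
  using sICL_frame_valid sICL_complete by blast

end
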